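(* Let $k>1$ be an integer with $k\equiv 1\pmod 4$, and let $\mathrm{SG}(n)$ denote the Sprague--Grundy value of a pile of $n$ tokens in the game $i\textsc{-Mark}(\{2\},\{k\})$. Let $b=2k$, $c_0=4k$, $c_m=k(c_{m-1}+2)$ for $m\ge1$, and $a_0=k$, $a_m=k(a_{m-1}+2)$ for $m\ge 1$ (so that $a_0<b<c_0<a_1<c_1<a_2<\cdots$). Let $X=[0,a_0-1]$, $Y=[a_0+1,b-1]$, $Z=[b+1,c_0-1]$, and for $m\ge 1$ let $A_m=[c_{m-1}+1,a_m-1]$ and $C_m=[a_m+1,c_m-1]$ (integer intervals). Then: (1) $\mathrm{SG}(b)=2$, and $\mathrm{SG}(a_m)=\mathrm{SG}(c_m)=2$ for all $m\ge 0$; (2) the sequence of SG values of the elements of $X$, in increasing order, is $(0,0,1,1)^{z},0$ with $z=(a_0-1)/4$; (3) the sequence of SG values of the elements of $Y$ is $(1,0,0,1)^{z'}$ with $z'=(b-a_0-1)/4$; (4) the sequence of SG values of the elements of $Z$ is $(0,0,1,1)^{z''},0$ with $z''=(c_0-b-2)/4$; (5) for every $m\ge 1$, the sequence of SG values of the elements of $A_m$ is $(1,0,0,1)^{y_m},1,0$ with $y_m=(a_m-c_{m-1}-3)/4$; (6) for every $m\ge 1$, the sequence of SG values of the elements of $C_m$ is $(1,0,0,1)^{y'_m},1,0$ with $y'_m=(c_m-a_m-3)/4$. Here $X^z$ denotes the $z$-fold concatenation of the finite sequence $X$.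
   Context: For a nonempty set $S$ of positive integers and a nonempty set $D$ of integers larger than $1$, the impartial game $i\textsc{-Mark}(S,D)$ is played on a single pile of $n\ge 0$ tokens: a move either replaces $n$ by $n-s$ for some $s\in S$ with $s\le n$, or replaces $n$ by $n/d$ for some $d\in D$ dividing $n$ (with $n>0$). The Sprague--Grundy value is defined recursively by $\mathrm{SG}(n)=\mathrm{mex}\{\mathrm{SG}(w): w \text{ an option of } n\}$, where $\mathrm{mex}(T)$ is the smallest nonnegative integer not in $T$. *)

theory Defs
  imports Main
begin

definition mex :: "nat set \<Rightarrow> nat" where
  "mex T = (LEAST x. x \<notin> T)"

definition is_option :: "nat set \<Rightarrow> nat set \<Rightarrow> nat \<Rightarrow> nat \<Rightarrow> bool" where
  "is_option S D n w \<longleftrightarrow>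
     (\<exists>s\<in>S. s \<le> n \<and> w = n - s) \<or> (\<exists>d\<in>D. n > 0 \<and> d dvd n \<and> w = n div d)"

text \<open>Sprague-Grundy value. For S of positive integers and D of integers > 1 every
  option is strictly smaller than n, so the guard w < n is vacuous there.\<close>
function SG :: "nat set \<Rightarrow> nat set \<Rightarrow> nat \<Rightarrow> nat" where
  "SG S D n = mex ((\<lambda>w. SG S D w) ` {w. w < n \<and> is_option S D n w})"
  by auto
termination by (relation "measure (\<lambda>(S,D,n). n)") auto

declare SG.simps[simp del]

fun aseq :: "nat \<Rightarrow> nat \<Rightarrow> nat" where
  "aseq k 0 = k"
| "aseq k (Suc m) = k * (aseq k m + 2)"

fun cseq :: "nat \<Rightarrow> nat \<Rightarrow> nat" where
  "cseq k 0 = 4 * k"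
| "cseq k (Suc m) = k * (cseq k m + 2)"

definition sgs :: "nat \<Rightarrow> nat \<Rightarrow> nat \<Rightarrow> nat list" where
  "sgs k lo hi = map (SG {2} {k}) [lo..<Suc hi]"

end

theory Submission
  imports Defs
begin

text \<open>Away from multiples of k the only move is n \<mapsto> n - 2, so SG values follow the
  period-4 pattern 1,1,0,0 at some phase. A multiple n = k j keeps the pattern exactly when
  SG(j) differs from the pattern value at n, which, since k \<equiv> 1 (mod 4), is the pattern value
  at j. Writing t_0 < t_1 < \<dots> for the pivots a_0 < c_0 < a_1 < c_1 < \<dots>, one has
  t_{i+2} = k (t_i + 2), so the quotients of the multiples of k between t_{i+1} and t_{i+2} are
  the points of the stretch before t_i, whose phase differs by two, together with t_i and
  t_i + 1. Hence the pattern persists, its phase advances by one at every pivot, and at t_{i+2}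
  the options have values 1 and 0, forcing 2.\<close>

definition pattern4 :: "nat \<Rightarrow> nat" where
  "pattern4 x = (if x mod 4 < 2 then 1 else 0)"

lemma pattern4_le_1: "pattern4 x \<le> 1"
  by (simp add: pattern4_def)

lemma pattern4_add_mult_4: "pattern4 (x + 4 * q) = pattern4 x"
  by (simp add: pattern4_def)

lemma pattern4_add_2: "pattern4 (x + 2) = 1 - pattern4 x"
  unfolding pattern4_def by (simp add: mod_add_left_eq[of x 4 2, symmetric]; presburger)

lemma map_upt_add_shift: "map f [a + d..<b + d] = map (\<lambda>x. f (x + d)) [a..<b]"
  by (rule nth_equalityI) (auto simp: add_ac)

lemma map_upt_periodic:
  assumes periodic: "\<And>x. f (x + d) = f x"
  shows "map f [s..<s + d * q + e] = concat (replicate q (map f [s..<s + d])) @ map f [s..<s + e]"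
proof (induction q arbitrary: s)
  case 0
  then show ?case by simp
next
  case (Suc q)
  have shift: "map f [s + d..<s + d + l] = map f [s..<s + l]" for l
    using map_upt_add_shift[of f s d "s + l"] by (simp add: add_ac periodic)
  have "[s..<s + d * Suc q + e] = [s..<s + d] @ [s + d..<s + d + d * q + e]"
    using upt_add_eq_append[of s "s + d" "d * q + e"] by (simp add: add_ac)
  then show ?case
    using Suc.IH[of "s + d"] by (simp add: shift)
qed

lemma mex_eqI: "m \<notin> T \<Longrightarrow> (\<And>i. i < m \<Longrightarrow> i \<in> T) \<Longrightarrow> mex T = m"
  unfolding mex_def by (rule Least_equality) (auto simp: not_le[symmetric])

lemma mex_empty: "mex {} = 0"
  by (rule mex_eqI) auto

lemma mex_singleton: "mex {x} = (if x = 0 then 1 else 0)"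
  by (rule mex_eqI) (auto split: if_splits)

lemma mex_pair_flip: "x \<le> 1 \<Longrightarrow> y \<noteq> 1 - x \<Longrightarrow> mex {x, y} = 1 - x"
  by (rule mex_eqI) (auto simp: le_Suc_eq)

lemma mex_1_0: "mex {1, 0} = 2"
  by (rule mex_eqI) auto

fun pivot :: "nat \<Rightarrow> nat \<Rightarrow> nat" where
  "pivot k 0 = k"
| "pivot k (Suc 0) = 4 * k"
| "pivot k (Suc (Suc i)) = k * (pivot k i + 2)"

lemma pivot_even: "pivot k (2 * m) = aseq k m"
  by (induction m) auto

lemma pivot_odd: "pivot k (Suc (2 * m)) = cseq k m"
  by (induction m) auto

fun segment :: "nat \<Rightarrow> nat \<Rightarrow> nat set" where
  "segment k 0 = {..<pivot k 0}"
| "segment k (Suc i) = {pivot k i<..<pivot k (Suc i)}"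

locale imark_2_k =
  fixes k :: nat
  assumes k_gt_1: "1 < k"
begin

abbreviation sg :: "nat \<Rightarrow> nat" where
  "sg \<equiv> SG {2} {k}"

lemma sg_eq: "sg n = mex ((if 2 \<le> n then {sg (n - 2)} else {})
    \<union> (if 0 < n \<and> k dvd n then {sg (n div k)} else {}))"
proof -
  have "{w. w < n \<and> is_option {2} {k} n w} =
      (if 2 \<le> n then {n - 2} else {}) \<union> (if 0 < n \<and> k dvd n then {n div k} else {})"
    using k_gt_1 by (auto simp: is_option_def split: if_splits)
  then show ?thesis
    by (subst SG.simps) (simp add: image_Un)
qed

lemma sg_0: "sg 0 = 0"
  by (simp add: sg_eq mex_empty)

lemma sg_1: "sg 1 = 0"
proof -
  have "\<not> k dvd 1"
    using k_gt_1 by simp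
  then show ?thesis
    using sg_eq[of 1] by (simp add: mex_empty)
qed

lemma sg_not_dvd: "2 \<le> n \<Longrightarrow> \<not> k dvd n \<Longrightarrow> sg n = mex {sg (n - 2)}"
  by (simp add: sg_eq[of n])

lemma sg_dvd: "2 \<le> n \<Longrightarrow> k dvd n \<Longrightarrow> sg n = mex {sg (n - 2), sg (n div k)}"
  by (simp add: sg_eq[of n] insert_commute)

lemma sg_eq_pattern4_on_interval:
  assumes base: "sg lo = pattern4 (lo + r)" "sg (lo + 1) = pattern4 (lo + 1 + r)"
    and hits: "\<And>n. lo + 2 \<le> n \<Longrightarrow> n \<le> hi \<Longrightarrow> k dvd n \<Longrightarrow> sg (n div k) \<noteq> pattern4 (n + r)"
  shows "lo \<le> n \<Longrightarrow> n \<le> hi \<Longrightarrow> sg n = pattern4 (n + r)"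
proof (induction n rule: less_induct)
  case (less n)
  consider "n = lo" | "n = lo + 1" | "lo + 2 \<le> n"
    using less.prems by linarith
  then show ?case
  proof cases
    case 3
    have "sg (n - 2) = pattern4 (n - 2 + r)"
      using less 3 by simp
    moreover have "n + r = n - 2 + r + 2"
      using 3 by simp
    then have "pattern4 (n + r) = 1 - pattern4 (n - 2 + r)"
      by (metis pattern4_add_2)
    ultimately have prev: "sg (n - 2) = 1 - pattern4 (n + r)"
      using pattern4_le_1[of "n - 2 + r"] by linarith
    show ?thesis
    proof (cases "k dvd n")
      case True
      then have "sg n = mex {sg (n - 2), sg (n div k)}"
        using 3 by (simp add: sg_dvd)
      then show ?thesis
        using prev hits[OF 3 less.prems(2) True] pattern4_le_1[of "n + r"]
        by (simp add: mex_pair_flip)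
    next
      case False
      then show ?thesis
        using 3 prev pattern4_le_1[of "n + r"] by (auto simp: sg_not_dvd mex_singleton)
    qed
  qed (use base in simp_all)
qed

end

locale imark_2_k_mod4 = imark_2_k +
  assumes k_mod_4: "k mod 4 = 1"
begin

lemma k_ge_5: "5 \<le> k"
  using k_gt_1 k_mod_4 by presburger

lemma mod_4_mult_k: "(k * x) mod 4 = x mod 4"
  using mod_mult_eq[of k 4 x] k_mod_4 by simp

lemma pattern4_div_k: "k dvd n \<Longrightarrow> pattern4 (n div k + r) = pattern4 (n + r)"
proof -
  assume "k dvd n"
  then have "(n div k) mod 4 = n mod 4"
    using mod_4_mult_k[of "n div k"] by simp
  then have "(n div k + r) mod 4 = (n + r) mod 4"
    by (metis mod_add_left_eq)
  then show ?thesis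
    by (simp add: pattern4_def)
qed

lemma sg_eq_pattern4_on_interval_mod4:
  assumes "sg lo = pattern4 (lo + r)" "sg (lo + 1) = pattern4 (lo + 1 + r)"
    and hits: "\<And>j. lo + 2 \<le> k * j \<Longrightarrow> k * j \<le> hi \<Longrightarrow> sg j \<noteq> pattern4 (j + r)"
    and "lo \<le> n" "n \<le> hi"
  shows "sg n = pattern4 (n + r)"
proof (rule sg_eq_pattern4_on_interval[OF assms(1,2) _ assms(4,5)])
  fix n assume "lo + 2 \<le> n" "n \<le> hi" "k dvd n"
  then show "sg (n div k) \<noteq> pattern4 (n + r)"
    using hits[of "n div k"] pattern4_div_k by auto
qed

lemma sg_after_mult:
  assumes "k dvd t" "0 < t"
  shows "sg (t + 1) = mex {sg (t - 1)}" and "sg t = 2 \<Longrightarrow> sg (t + 2) = 0"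
proof -
  have "\<not> k dvd 1" "\<not> k dvd 2"
    using k_ge_5 by (auto dest: dvd_imp_le)
  then have "\<not> k dvd t + 1" "\<not> k dvd t + 2"
    using assms(1) dvd_add_right_iff by blast+
  then show "sg (t + 1) = mex {sg (t - 1)}" and "sg t = 2 \<Longrightarrow> sg (t + 2) = 0"
    using assms(2) by (auto simp: sg_not_dvd mex_singleton)
qed

lemma k_dvd_pivot: "k dvd pivot k i"
  by (induction i rule: induct_nat_012) auto

lemma pivot_mod_4: "(pivot k i + i) mod 4 = 1"
proof (induction i rule: induct_nat_012)
  case (ge2 i)
  have "(k * (pivot k i + 2)) mod 4 = (pivot k i + 2) mod 4"
    by (rule mod_4_mult_k)
  then have "(k * (pivot k i + 2) + (i + 2)) mod 4 = (pivot k i + 2 + (i + 2)) mod 4"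
    by (rule mod_add_cong) simp
  also have "\<dots> = (pivot k i + i) mod 4"
    by presburger
  finally show ?case
    using ge2.IH(1) by simp
qed (use k_mod_4 in simp_all)

lemma pivot_gap: "pivot k i + 3 \<le> pivot k (Suc i)"
proof (induction i rule: induct_nat_012)
  case 1
  have "5 * k \<le> k * k"
    using k_ge_5 by (rule mult_le_mono1)
  then have "4 * k + 3 \<le> k * k + 2 * k"
    using k_ge_5 by linarith
  then show ?case
    by (simp add: algebra_simps)
next
  case (ge2 i)
  have "k * (pivot k i + 2) + 3 \<le> k * (pivot k i + 5)"
    using k_ge_5 by (simp add: algebra_simps)
  also have "\<dots> \<le> k * (pivot k (Suc i) + 2)"
    using ge2.IH(1) by (intro mult_le_mono2) simp
  finally show ?case by simp
qed (use k_gt_1 in simp)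

lemma pivot_Suc_ge: "4 * k \<le> pivot k (Suc i)"
proof (induction i)
  case (Suc i)
  then show ?case
    using pivot_gap[of "Suc i"] by linarith
qed simp

lemma double_far_from_pivot: "2 * k + 2 \<le> pivot k i \<or> pivot k i + 3 \<le> 2 * k"
proof (cases i)
  case (Suc i')
  then show ?thesis
    using pivot_Suc_ge[of i'] k_ge_5 by (simp only:) linarith
qed (use k_ge_5 in simp)

lemma mem_segment_of_mult:
  assumes "pivot k (Suc i) < k * j" "j < pivot k i"
  shows "j \<in> segment k i"
proof (cases i)
  case (Suc i')
  then have "k * (pivot k i' + 2) < k * j"
    using assms(1) by simp
  then have "pivot k i' + 2 < j"
    by (rule mult_left_less_imp_less) simp
  then show ?thesis
    using Suc assms(2) by simp
qed (use assms in simp)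

lemma sg_below_k: "n < k \<Longrightarrow> sg n = pattern4 (n + 2)"
proof (rule sg_eq_pattern4_on_interval_mod4[of 0 2 "k - 1"])
  show "sg 0 = pattern4 (0 + 2)" "sg (0 + 1) = pattern4 (0 + 1 + 2)"
    using sg_0 sg_1 by (simp_all add: pattern4_def)
  fix j assume "0 + 2 \<le> k * j" "k * j \<le> k - 1"
  then show "sg j \<noteq> pattern4 (j + 2)"
    by (cases j) auto
qed simp_all

lemma sg_k: "sg k = 2"
proof -
  have "sg (k - 2) = pattern4 (k - 2 + 2)"
    using sg_below_k[of "k - 2"] k_ge_5 by simp
  also have "\<dots> = pattern4 k"
    using k_ge_5 by (intro arg_cong[where f = pattern4]) linarith
  also have "\<dots> = 1"
    using k_mod_4 by (simp add: pattern4_def)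
  finally have "sg k = mex {1, 0}"
    using sg_dvd[of k] k_gt_1 sg_1 by simp
  then show ?thesis
    using mex_1_0 by simp
qed

lemma sg_k_to_2k: "k < n \<Longrightarrow> n < 2 * k \<Longrightarrow> sg n = pattern4 (n + 3)"
proof (rule sg_eq_pattern4_on_interval_mod4[of "k + 1" 3 "2 * k - 1"])
  have "sg (k - 1) = pattern4 (k + 1)"
    using sg_below_k[of "k - 1"] k_ge_5 by simp
  moreover have "pattern4 (k + 1) = 0" "pattern4 (k + 4) = 1" "pattern4 (k + 5) = 0"
    unfolding pattern4_def using k_mod_4 by presburger+
  ultimately show "sg (k + 1) = pattern4 (k + 1 + 3)" "sg (k + 1 + 1) = pattern4 (k + 1 + 1 + 3)"
    using sg_after_mult[of k] sg_k k_ge_5 by (simp_all add: mex_singleton add_ac)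
  fix j assume "k + 1 + 2 \<le> k * j" "k * j \<le> 2 * k - 1"
  then have "k * 1 < k * j" "k * j < k * 2"
    by linarith+
  then show "sg j \<noteq> pattern4 (j + 3)"
    by simp
qed simp_all

lemma sg_double: "sg (2 * k) = 2"
proof -
  have "sg (2 * k - 2) = pattern4 (2 * k + 1)" "sg 2 = pattern4 4"
    using sg_k_to_2k[of "2 * k - 2"] sg_below_k[of 2] k_ge_5 by simp_all
  moreover have "pattern4 (2 * k + 1) = 0" "pattern4 4 = 1"
    unfolding pattern4_def using k_mod_4 by presburger+
  ultimately have "sg (2 * k) = mex {0, 1}"
    using sg_dvd[of "2 * k"] k_gt_1 by simp
  then show ?thesis
    by (metis mex_1_0 insert_commute)
qed

lemma sg_2k_to_4k: "2 * k < n \<Longrightarrow> n < 4 * k \<Longrightarrow> sg n = pattern4 (n + 3)"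
proof (rule sg_eq_pattern4_on_interval_mod4[of "2 * k + 1" 3 "4 * k - 1"])
  have "sg (2 * k - 1) = pattern4 (2 * k + 2)"
    using sg_k_to_2k[of "2 * k - 1"] k_ge_5 by simp
  moreover have "pattern4 (2 * k + 2) = 1" "pattern4 (2 * k + 4) = 0" "pattern4 (2 * k + 5) = 0"
    unfolding pattern4_def using k_mod_4 by presburger+
  ultimately show "sg (2 * k + 1) = pattern4 (2 * k + 1 + 3)"
      "sg (2 * k + 1 + 1) = pattern4 (2 * k + 1 + 1 + 3)"
    using sg_after_mult[of "2 * k"] sg_double k_ge_5 by (simp_all add: mex_singleton add_ac)
  fix j assume "2 * k + 1 + 2 \<le> k * j" "k * j \<le> 4 * k - 1"
  then have "k * 2 < k * j" "k * j < k * 4"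
    by linarith+
  then have "j = 3"
    by simp
  moreover have "sg 3 = 1"
    using sg_below_k[of 3] k_ge_5 by (simp add: pattern4_def)
  ultimately show "sg j \<noteq> pattern4 (j + 3)"
    by (simp add: pattern4_def)
qed simp_all

lemma sg_4k: "sg (4 * k) = 2"
proof -
  have "sg (4 * k - 2) = pattern4 (4 * k + 1)" "sg 4 = pattern4 6"
    using sg_2k_to_4k[of "4 * k - 2"] sg_below_k[of 4] k_ge_5 by simp_all
  moreover have "pattern4 (4 * k + 1) = 1" "pattern4 6 = 0"
    by (simp_all add: pattern4_def)
  ultimately have "sg (4 * k) = mex {1, 0}"
    using sg_dvd[of "4 * k"] k_gt_1 by simp
  then show ?thesis
    using mex_1_0 by simp
qed

(* 2 * k lies in segment 1 but is off the pattern: its division move leads to 2, whose value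
   is the pattern value at 2 * k, so sg (2 * k) = 2. *)
definition sg_profile :: "nat \<Rightarrow> bool" where
  "sg_profile i \<longleftrightarrow> sg (pivot k i) = 2 \<and>
     (\<forall>n \<in> segment k i - {2 * k}. sg n = pattern4 (n + i + 2))"

lemma sg_profile_0: "sg_profile 0"
  unfolding sg_profile_def using sg_k sg_below_k by simp

lemma sg_profile_1: "sg_profile (Suc 0)"
proof -
  have "sg n = pattern4 (n + 3)" if "k < n" "n < 4 * k" "n \<noteq> 2 * k" for n
    using that sg_k_to_2k sg_2k_to_4k by (cases "n < 2 * k") auto
  then show ?thesis
    unfolding sg_profile_def using sg_4k by (simp add: numeral_eq_Suc)
qed

lemma sg_quotient_off_pattern4:
  assumes prev: "sg_profile i" and cur: "sg_profile (Suc i)"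
    and "pivot k (Suc i) < k * j" "j < pivot k i + 2"
  shows "sg j \<noteq> pattern4 (j + i + 4)"
proof -
  define t where "t = pivot k i"
  have mod_t: "(t + i) mod 4 = 1"
    unfolding t_def by (rule pivot_mod_4)
  consider "j < t" | "j = t" | "j = t + 1"
    using assms(4) t_def by linarith
  then show ?thesis
  proof cases
    case 1
    then have seg: "j \<in> segment k i"
      using mem_segment_of_mult assms(3) t_def by blast
    show ?thesis
    proof (cases "j = 2 * k")
      case True
      then show ?thesis
        using sg_double pattern4_le_1[of "j + i + 4"] by simp
    next
      case False
      then have "sg j = pattern4 (j + i + 2)"
        using prev seg by (simp add: sg_profile_def)
      moreover have "j + i + 4 = j + i + 2 + 2"
        by simp
      then have "pattern4 (j + i + 4) = 1 - pattern4 (j + i + 2)"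
        by (metis pattern4_add_2)
      ultimately show ?thesis
        using pattern4_le_1[of "j + i + 2"] by presburger
    qed
  next
    case 2
    then show ?thesis
      using prev pattern4_le_1[of "j + i + 4"] by (simp add: sg_profile_def t_def)
  next
    case 3
    have "t + 1 \<in> segment k (Suc i) - {2 * k}"
      using pivot_gap[of i] double_far_from_pivot[of i] t_def by auto
    then have "sg j = pattern4 (t + 1 + Suc i + 2)"
      using cur 3 by (simp add: sg_profile_def)
    moreover have "pattern4 (t + 1 + Suc i + 2) = 1" "pattern4 (t + 1 + i + 4) = 0"
      unfolding pattern4_def using mod_t by presburger+
    ultimately show ?thesis
      using 3 by simp
  qed
qed

lemma sg_on_next_segment:
  assumes prev: "sg_profile i" and cur: "sg_profile (Suc i)"
    and "pivot k (Suc i) < n" "n < pivot k (Suc (Suc i))"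
  shows "sg n = pattern4 (n + (i + 4))"
proof -
  define t t' where "t = pivot k i" and "t' = pivot k (Suc i)"
  have mod_t': "(t' + Suc i) mod 4 = 1"
    unfolding t'_def by (rule pivot_mod_4)
  have "t + 3 \<le> t'" "2 * k + 2 \<le> t'"
    using pivot_gap[of i] pivot_Suc_ge[of i] k_ge_5 t_def t'_def by simp_all
  then have "t' - 1 \<in> segment k (Suc i) - {2 * k}"
    using t_def t'_def by auto
  then have "sg (t' - 1) = pattern4 (t' - 1 + Suc i + 2)"
    using cur by (simp add: sg_profile_def)
  also have "t' - 1 + Suc i + 2 = t' + Suc i + 1"
    using \<open>t + 3 \<le> t'\<close> by simp
  also have "pattern4 (t' + Suc i + 1) = 0"
    unfolding pattern4_def using mod_t' by presburger
  finally have "sg (t' - 1) = 0" .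
  moreover have "sg t' = 2" "k dvd t'" "0 < t'"
    using cur k_dvd_pivot \<open>t + 3 \<le> t'\<close> by (simp_all add: sg_profile_def t'_def)
  moreover have "pattern4 (t' + 1 + (i + 4)) = 1" "pattern4 (t' + 1 + 1 + (i + 4)) = 0"
    unfolding pattern4_def using mod_t' by presburger+
  ultimately have start: "sg (t' + 1) = pattern4 (t' + 1 + (i + 4))"
      "sg (t' + 1 + 1) = pattern4 (t' + 1 + 1 + (i + 4))"
    using sg_after_mult[of t'] by (simp_all add: mex_singleton)
  show ?thesis
  proof (rule sg_eq_pattern4_on_interval_mod4[OF start, of "pivot k (Suc (Suc i)) - 1"])
    fix j assume "t' + 1 + 2 \<le> k * j" "k * j \<le> pivot k (Suc (Suc i)) - 1"
    then have "pivot k (Suc i) < k * j" "k * j < k * (pivot k i + 2)"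
      using t_def t'_def by simp_all
    moreover from this(2) have "j < pivot k i + 2"
      by (rule mult_left_less_imp_less) simp
    ultimately show "sg j \<noteq> pattern4 (j + (i + 4))"
      using sg_quotient_off_pattern4[OF prev cur] by (simp add: add.assoc)
  qed (use assms(3,4) t'_def in simp_all)
qed

lemma sg_profile_Suc_Suc:
  assumes prev: "sg_profile i" and cur: "sg_profile (Suc i)"
  shows "sg_profile (Suc (Suc i))"
proof -
  define t t' t'' where "t = pivot k i" and "t' = pivot k (Suc i)"
    and "t'' = pivot k (Suc (Suc i))"
  have gaps: "t + 3 \<le> t'" "t' + 3 \<le> t''"
    using pivot_gap[of i] pivot_gap[of "Suc i"] t_def t'_def t''_def by simp_all
  have on_next: "sg n = pattern4 (n + (i + 4))" if "t' < n" "n < t''" for n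
    using sg_on_next_segment[OF prev cur] that t'_def t''_def by simp
  have "sg (t'' - 2) = pattern4 (t'' - 2 + (i + 4))"
    using on_next gaps by simp
  also have "t'' - 2 + (i + 4) = t'' + Suc (Suc i)"
    using gaps by simp
  also have "pattern4 (t'' + Suc (Suc i)) = 1"
    using pivot_mod_4[of "Suc (Suc i)"] t''_def by (simp add: pattern4_def)
  finally have "sg (t'' - 2) = 1" .
  moreover have "t + 2 \<in> segment k (Suc i) - {2 * k}"
    using gaps double_far_from_pivot[of i] t_def t'_def by auto
  then have "sg (t + 2) = pattern4 (t + 2 + Suc i + 2)"
    using cur by (simp add: sg_profile_def)
  moreover have "pattern4 (t + 2 + Suc i + 2) = 0"
    unfolding pattern4_def using pivot_mod_4[of i] t_def by presburger
  moreover have "t'' div k = t + 2" "k dvd t''"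
    using k_gt_1 k_dvd_pivot t_def t''_def by simp_all
  ultimately have "sg t'' = mex {1, 0}"
    using sg_dvd[of t''] gaps by simp
  then have "sg t'' = 2"
    using mex_1_0 by simp
  then show ?thesis
    unfolding sg_profile_def segment.simps t'_def[symmetric] t''_def[symmetric]
    using on_next by (simp add: numeral_eq_Suc)
qed

lemma sg_profile: "sg_profile i"
  by (induction i rule: induct_nat_012)
    (simp_all add: sg_profile_0 sg_profile_1 sg_profile_Suc_Suc)

lemma sg_pivot: "sg (pivot k i) = 2"
  using sg_profile[of i] by (simp add: sg_profile_def)

lemma sgs_eq_pattern4:
  assumes len: "Suc hi = lo + 4 * q + e" and phase: "(lo + r) mod 4 = s"
    and sg_lo_hi: "\<And>n. lo \<le> n \<Longrightarrow> n \<le> hi \<Longrightarrow> sg n = pattern4 (n + r)"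
  shows "sgs k lo hi = concat (replicate q (map pattern4 [s..<s + 4])) @ map pattern4 [s..<s + e]"
proof -
  define f where "f n = pattern4 (n + r)" for n
  have shift: "map f [lo..<lo + l] = map pattern4 [s..<s + l]" for l
  proof -
    define w where "w = (lo + r) div 4"
    have w: "lo + r = s + 4 * w" "lo + l + r = s + l + 4 * w"
      using phase div_mult_mod_eq[of "lo + r" 4] unfolding w_def by linarith+
    have "map f [lo..<lo + l] = map pattern4 [lo + r..<lo + l + r]"
      using map_upt_add_shift[of pattern4 lo r "lo + l"] by (simp add: f_def)
    also have "\<dots> = map (\<lambda>x. pattern4 (x + 4 * w)) [s..<s + l]"
      unfolding w by (rule map_upt_add_shift)
    finally show ?thesis
      by (simp add: pattern4_add_mult_4)
  qed
  have "sgs k lo hi = map f [lo..<Suc hi]"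
    unfolding sgs_def f_def using sg_lo_hi by (intro map_cong) auto
  also have "\<dots> = map f [lo..<lo + 4 * q + e]"
    by (simp only: len)
  also have "\<dots> = concat (replicate q (map f [lo..<lo + 4])) @ map f [lo..<lo + e]"
  proof (rule map_upt_periodic)
    fix x
    show "f (x + 4) = f x"
      using pattern4_add_mult_4[of "x + r" 1] by (simp add: f_def add_ac)
  qed
  finally show ?thesis
    by (simp only: shift)
qed

lemma k_cases:
  obtains D where "k = 4 * D + 1"
  using div_mult_mod_eq[of k 4] k_mod_4 by (metis add.commute mult.commute)

lemma sgs_below_k: "sgs k 0 (k - 1) = concat (replicate ((k - 1) div 4) [0, 0, 1, 1]) @ [0]"
proof -
  obtain D where D: "k = 4 * D + 1"
    by (rule k_cases)
  have "sgs k 0 (k - 1) = concat (replicate D (map pattern4 [2..<2 + 4])) @ map pattern4 [2..<2 + 1]"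
    by (rule sgs_eq_pattern4[where r = 2]) (use D sg_below_k in auto)
  then show ?thesis
    using D by (simp add: pattern4_def upt_rec)
qed

lemma sgs_k_to_2k: "sgs k (k + 1) (2 * k - 1) = concat (replicate ((2 * k - k - 1) div 4) [1, 0, 0, 1])"
proof -
  obtain D where D: "k = 4 * D + 1"
    by (rule k_cases)
  have "sgs k (k + 1) (2 * k - 1)
      = concat (replicate D (map pattern4 [1..<1 + 4])) @ map pattern4 [1..<1 + 0]"
    by (rule sgs_eq_pattern4[where r = 3]) (use D sg_k_to_2k in auto)
  then show ?thesis
    using D by (simp add: pattern4_def upt_rec)
qed

lemma sgs_2k_to_4k:
  "sgs k (2 * k + 1) (4 * k - 1) = concat (replicate ((4 * k - 2 * k - 2) div 4) [0, 0, 1, 1]) @ [0]"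
proof -
  obtain D where D: "k = 4 * D + 1"
    by (rule k_cases)
  have "sgs k (2 * k + 1) (4 * k - 1)
      = concat (replicate (2 * D) (map pattern4 [2..<2 + 4])) @ map pattern4 [2..<2 + 1]"
  proof (rule sgs_eq_pattern4[where r = 3])
    show "Suc (4 * k - 1) = 2 * k + 1 + 4 * (2 * D) + 1" "(2 * k + 1 + 3) mod 4 = 2"
      using D by simp_all presburger
    show "sg n = pattern4 (n + 3)" if "2 * k + 1 \<le> n" "n \<le> 4 * k - 1" for n
      using that sg_2k_to_4k by simp
  qed
  then show ?thesis
    using D by (simp add: pattern4_def upt_rec)
qed

lemma sgs_between_pivots:
  "sgs k (pivot k (Suc i) + 1) (pivot k (Suc (Suc i)) - 1)
    = concat (replicate ((pivot k (Suc (Suc i)) - pivot k (Suc i) - 3) div 4) [1, 0, 0, 1]) @ [1, 0]"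
proof -
  define t' t'' where "t' = pivot k (Suc i)" and "t'' = pivot k (Suc (Suc i))"
  define d where "d = t'' - t' - 3"
  have t'': "t'' = t' + 3 + d"
    using pivot_gap[of "Suc i"] t'_def t''_def d_def by simp
  have mod_t': "(t' + Suc i) mod 4 = 1"
    unfolding t'_def by (rule pivot_mod_4)
  moreover have "(t' + 3 + d + Suc (Suc i)) mod 4 = 1"
    using pivot_mod_4[of "Suc (Suc i)"] t'' t''_def by simp
  ultimately have "d mod 4 = 0"
    by presburger
  then have len: "Suc (t'' - 1) = t' + 1 + 4 * (d div 4) + 2"
    using t'' div_mult_mod_eq[of d 4] by linarith
  have "sgs k (t' + 1) (t'' - 1)
      = concat (replicate (d div 4) (map pattern4 [1..<1 + 4])) @ map pattern4 [1..<1 + 2]"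
  proof (rule sgs_eq_pattern4[OF len, where r = "i + 4"])
    show "(t' + 1 + (i + 4)) mod 4 = 1"
      using mod_t' by presburger
    show "sg n = pattern4 (n + (i + 4))" if "t' + 1 \<le> n" "n \<le> t'' - 1" for n
      using sg_on_next_segment[OF sg_profile sg_profile] that t'_def t''_def t'' by simp
  qed
  then show ?thesis
    unfolding d_def t'_def t''_def by (simp add: pattern4_def upt_rec)
qed

lemma sgs_cseq_to_aseq:
  assumes "1 \<le> m"
  shows "sgs k (cseq k (m - 1) + 1) (aseq k m - 1)
    = concat (replicate ((aseq k m - cseq k (m - 1) - 3) div 4) [1, 0, 0, 1]) @ [1, 0]"
proof -
  obtain m' where "m = Suc m'"
    using assms by (cases m) auto
  then show ?thesis
    using sgs_between_pivots[of "2 * m'"] by (simp add: pivot_even pivot_odd)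
qed

lemma sgs_aseq_to_cseq:
  assumes "1 \<le> m"
  shows "sgs k (aseq k m + 1) (cseq k m - 1)
    = concat (replicate ((cseq k m - aseq k m - 3) div 4) [1, 0, 0, 1]) @ [1, 0]"
proof -
  obtain m' where "m = Suc m'"
    using assms by (cases m) auto
  then show ?thesis
    using sgs_between_pivots[of "Suc (2 * m')"] by (simp add: pivot_even pivot_odd)
qed

end

theorem mainTheorem3:
  fixes k :: nat
  assumes "k > 1" and "k mod 4 = 1"
  shows "SG {2} {k} (2 * k) = 2
    \<and> (\<forall>m. SG {2} {k} (aseq k m) = 2 \<and> SG {2} {k} (cseq k m) = 2)
    \<and> sgs k 0 (aseq k 0 - 1) = concat (replicate ((aseq k 0 - 1) div 4) [0,0,1,1]) @ [0]
    \<and> sgs k (aseq k 0 + 1) (2 * k - 1) = concat (replicate ((2 * k - aseq k 0 - 1) div 4) [1,0,0,1])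
    \<and> sgs k (2 * k + 1) (cseq k 0 - 1) = concat (replicate ((cseq k 0 - 2 * k - 2) div 4) [0,0,1,1]) @ [0]
    \<and> (\<forall>m\<ge>1. sgs k (cseq k (m - 1) + 1) (aseq k m - 1)
          = concat (replicate ((aseq k m - cseq k (m - 1) - 3) div 4) [1,0,0,1]) @ [1,0])
    \<and> (\<forall>m\<ge>1. sgs k (aseq k m + 1) (cseq k m - 1)
          = concat (replicate ((cseq k m - aseq k m - 3) div 4) [1,0,0,1]) @ [1,0])"
proof -
  interpret imark_2_k_mod4 k
    using assms by unfold_locales
  have "SG {2} {k} (aseq k m) = 2 \<and> SG {2} {k} (cseq k m) = 2" for m
    using sg_pivot[of "2 * m"] sg_pivot[of "Suc (2 * m)"] by (simp add: pivot_even pivot_odd)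
  then show ?thesis
    using sg_double sgs_below_k sgs_k_to_2k sgs_2k_to_4k sgs_cseq_to_aseq sgs_aseq_to_cseq
    by simp
qed

end
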